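(* Consider a finite-state Markov chain on a set $Q$ of states with $|Q|=n\ge1$, and let $y_{\min}$ be its smallest nonzero transition probability. Let $p\in Q$ and $S\subseteq Q$, and on runs starting in $p$ let $T$ be the number of steps after which the run first visits a state of $S$ ($T$ undefined if the run never visits $S$). Then for all $k\ge n$, $\mathcal{P}(T\text{ is defined and }T\ge k)\le 2c^k$, where $c=\exp(-y_{\min}^n/n)$. Moreover, if $\mathcal{P}(T\text{ is defined})=1$, then $\mathbb{E}T\le 5n/y_{\min}^n$.
   Context: Standard finite-state discrete-time Markov chain; $\mathcal{P}$ and $\mathbb{E}$ are probability and expectation over runs starting in $p$. *)

theory Defs
  imports "HOL-Probability.Probability"
begin

text \<open>A finite-state Markov chain on the finite type 'a with transition kernel K.
  The run starting in p is p = x0, x1, x2, ...; a finite run prefix is p # xs.\<close>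

definition path_prob :: "('a \<Rightarrow> 'a pmf) \<Rightarrow> 'a \<Rightarrow> 'a list \<Rightarrow> real" where
  "path_prob K p xs = (\<Prod>i<length xs. pmf (K ((p # xs) ! i)) ((p # xs) ! Suc i))"

text \<open>Probability that the first visit of S (counting steps from time 0) happens at step j,
  i.e. P(T = j).\<close>
definition hit_time_prob :: "('a::finite \<Rightarrow> 'a pmf) \<Rightarrow> 'a set \<Rightarrow> 'a \<Rightarrow> nat \<Rightarrow> real" where
  "hit_time_prob K S p j =
     (\<Sum>xs \<in> {xs. length xs = j \<and> (\<forall>i<j. (p # xs) ! i \<notin> S) \<and> (p # xs) ! j \<in> S}.
        path_prob K p xs)"

definition y_min :: "('a::finite \<Rightarrow> 'a pmf) \<Rightarrow> real" where
  "y_min K = Min {pmf (K x) y | x y. pmf (K x) y > 0}"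

end

theory Submission
  imports Defs
begin

text \<open>
  Let \<open>b = y_min\<^sup>n\<close> and let \<open>R\<close> be the set of states from which \<open>S\<close> is visited with
  positive probability. The sets of states that visit \<open>S\<close> with positive probability within
  \<open>i\<close> steps grow with \<open>i\<close> and stay constant once two consecutive ones agree, so they stabilise
  after at most \<open>n - 1\<close> steps. Hence from every state of \<open>R\<close> some path of length \<open>< n\<close> reaches
  \<open>S\<close>, and \<open>P(T < n) \<ge> b\<close>. By the Markov property, the probability of staying outside \<open>S\<close>
  for \<open>k\<close> steps while remaining in \<open>R\<close> is at most \<open>(1 - b)\<^bsup>\<lfloor>k/n\<rfloor>\<^esup>\<close>; it dominates
  \<open>P(k \<le> T < \<infinity>)\<close>. The tail bound follows from \<open>(1 - b)\<^bsup>\<lfloor>k/n\<rfloor>\<^esup> \<le> 2 exp (-b k / n)\<close>,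
  and summing the tails gives \<open>E T \<le> n / b\<close>, without using that \<open>T\<close> is finite almost surely.
\<close>

definition first_hit_paths :: "'a set \<Rightarrow> 'a \<Rightarrow> nat \<Rightarrow> 'a list set" where
  "first_hit_paths S p j =
     {xs. length xs = j \<and> (\<forall>i<j. (p # xs) ! i \<notin> S) \<and> (p # xs) ! j \<in> S}"

lemma hit_time_prob_eq_sum_paths:
  "hit_time_prob K S p j = (\<Sum>xs\<in>first_hit_paths S p j. path_prob K p xs)"
  unfolding hit_time_prob_def first_hit_paths_def ..

lemma finite_first_hit_paths: "finite (first_hit_paths S (p::'a::finite) j)"
proof -
  have "finite {xs. set xs \<subseteq> (UNIV::'a set) \<and> length xs = j}"
    by (rule finite_lists_length_eq) simp
  then show ?thesis
    by (rule finite_subset[rotated]) (auto simp: first_hit_paths_def)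
qed

lemma first_hit_paths_0: "first_hit_paths S p 0 = (if p \<in> S then {[]} else {})"
  by (auto simp: first_hit_paths_def)

lemma first_hit_paths_Suc:
  "first_hit_paths S p (Suc j) =
     (if p \<in> S then {} else (\<lambda>(y, ys). y # ys) ` (SIGMA y:UNIV. first_hit_paths S y j))"
proof (cases "p \<in> S")
  case True
  then show ?thesis by (force simp: first_hit_paths_def)
next
  case False
  have "xs \<in> first_hit_paths S p (Suc j) \<longleftrightarrow>
          (\<exists>y ys. xs = y # ys \<and> ys \<in> first_hit_paths S y j)" for xs
    using False by (cases xs) (auto simp: first_hit_paths_def All_less_Suc2)
  then show ?thesis using False by force
qed

lemma path_prob_Cons: "path_prob K p (y # ys) = pmf (K p) y * path_prob K y ys"
  unfolding path_prob_def by (simp only: length_Cons prod.lessThan_Suc_shift) simp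

lemma hit_time_prob_0: "hit_time_prob K S p 0 = (if p \<in> S then 1 else 0)"
  by (simp add: hit_time_prob_eq_sum_paths first_hit_paths_0 path_prob_def)

lemma hit_time_prob_Suc:
  "hit_time_prob K S p (Suc j) =
     (if p \<in> S then 0 else (\<Sum>y\<in>UNIV. pmf (K p) y * hit_time_prob K S y j))"
proof (cases "p \<in> S")
  case True
  then show ?thesis by (simp add: hit_time_prob_eq_sum_paths first_hit_paths_Suc)
next
  case False
  have inj: "inj_on (\<lambda>(y, ys). y # ys) (SIGMA y:UNIV. first_hit_paths S y j)"
    by (auto simp: inj_on_def)
  have "hit_time_prob K S p (Suc j) =
          (\<Sum>(y, ys)\<in>(SIGMA y:UNIV. first_hit_paths S y j). pmf (K p) y * path_prob K y ys)"
    using False unfolding hit_time_prob_eq_sum_paths first_hit_paths_Suc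
    by (simp only: if_False sum.reindex[OF inj]) (simp add: case_prod_unfold path_prob_Cons)
  also have "\<dots> = (\<Sum>y\<in>UNIV. pmf (K p) y * hit_time_prob K S y j)"
    by (simp add: sum.Sigma[symmetric] finite_first_hit_paths hit_time_prob_eq_sum_paths
        sum_distrib_left)
  finally show ?thesis using False by simp
qed

lemma hit_time_prob_nonneg: "0 \<le> hit_time_prob K S p j"
  unfolding hit_time_prob_def path_prob_def by (intro sum_nonneg prod_nonneg) auto

lemma hit_time_prob_Suc_pos_iff:
  "0 < hit_time_prob K S p (Suc j) \<longleftrightarrow>
     p \<notin> S \<and> (\<exists>y. 0 < pmf (K p) y \<and> 0 < hit_time_prob K S y j)"
proof -
  have "0 < (\<Sum>y\<in>UNIV. pmf (K p) y * hit_time_prob K S y j) \<longleftrightarrow>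
          (\<exists>y. 0 < pmf (K p) y * hit_time_prob K S y j)"
    by (metis (no_types, lifting) UNIV_I finite_code hit_time_prob_nonneg less_eq_real_def
        mult_nonneg_nonneg pmf_nonneg sum_nonneg_eq_0_iff sum_pos2)
  then show ?thesis
    by (simp add: hit_time_prob_Suc zero_less_mult_iff)
qed

lemma
  fixes K :: "'a::finite \<Rightarrow> 'a pmf"
  shows y_min_pos: "0 < y_min K"
    and y_min_le_1: "y_min K \<le> 1"
    and y_min_le_pmf: "0 < pmf (K x) y \<Longrightarrow> y_min K \<le> pmf (K x) y"
proof -
  let ?A = "{pmf (K x) y | x y. 0 < pmf (K x) y}"
  have fin: "finite ?A"
    by (rule finite_subset[of _ "(\<lambda>(x, y). pmf (K x) y) ` UNIV"]) auto
  obtain y0 where "y0 \<in> set_pmf (K x)"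
    by (meson ex_in_conv set_pmf_not_empty)
  then have "?A \<noteq> {}"
    by (auto simp: set_pmf_eq')
  then have "y_min K \<in> ?A"
    unfolding y_min_def using fin by (rule Min_in[rotated])
  then show "0 < y_min K" "y_min K \<le> 1"
    using pmf_le_1 by auto
  show "0 < pmf (K x) y \<Longrightarrow> y_min K \<le> pmf (K x) y"
    unfolding y_min_def by (rule Min_le[OF fin]) auto
qed

lemma hit_time_prob_pos_imp_ge:
  "0 < hit_time_prob K S p j \<Longrightarrow> y_min K ^ j \<le> hit_time_prob K S p j"
proof (induction j arbitrary: p)
  case 0
  then show ?case by (simp add: hit_time_prob_0 split: if_splits)
next
  case (Suc j)
  then obtain y where "p \<notin> S" and y: "0 < pmf (K p) y" "0 < hit_time_prob K S y j"
    by (auto simp: hit_time_prob_Suc_pos_iff)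
  have "y_min K ^ Suc j \<le> pmf (K p) y * hit_time_prob K S y j"
    unfolding power_Suc using y Suc.IH y_min_le_pmf y_min_pos[of K]
    by (intro mult_mono) auto
  also have "\<dots> \<le> (\<Sum>z\<in>UNIV. pmf (K p) z * hit_time_prob K S z j)"
    by (rule member_le_sum) (auto simp: hit_time_prob_nonneg)
  finally show ?case
    using \<open>p \<notin> S\<close> by (simp add: hit_time_prob_Suc)
qed

lemma finite_mono_chain_stable:
  fixes A :: "nat \<Rightarrow> 'a::finite set"
  assumes "mono A" and "A 0 \<noteq> {}"
    and "\<And>i. A (Suc i) = A i \<Longrightarrow> A (Suc (Suc i)) = A (Suc i)"
  shows "A j \<subseteq> A (CARD('a) - 1)"
proof -
  obtain N where strict: "\<forall>n\<le>N. \<forall>m\<le>N. m < n \<longrightarrow> A m < A n"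
    and const: "\<forall>n\<ge>N. A N = A n"
    using finite_mono_remains_stable_implies_strict_prefix[of A] assms by auto
  have "i \<le> N \<Longrightarrow> Suc i \<le> card (A i)" for i
  proof (induction i)
    case 0
    then show ?case using \<open>A 0 \<noteq> {}\<close> by (simp add: Suc_le_eq card_gt_0_iff)
  next
    case (Suc i)
    then show ?case using strict psubset_card_mono[of "A (Suc i)" "A i"] by simp
  qed
  from this[of N] have "N < CARD('a)"
    using card_mono[of UNIV "A N"] by simp
  then have "A N = A (CARD('a) - 1)"
    using const by (simp add: less_imp_le_nat le_diff_conv2)
  moreover have "A j \<subseteq> A (max j N)"
    using \<open>mono A\<close> by (simp add: monoD)
  ultimately show ?thesis
    using const[rule_format, of "max j N"] by simp
qed

definition reach_within :: "('a::finite \<Rightarrow> 'a pmf) \<Rightarrow> 'a set \<Rightarrow> nat \<Rightarrow> 'a set" where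
  "reach_within K S i = {p. \<exists>j\<le>i. 0 < hit_time_prob K S p j}"

lemma reach_within_0: "reach_within K S 0 = S"
  by (auto simp: reach_within_def hit_time_prob_0)

lemma reach_within_Suc:
  "reach_within K S (Suc i) =
     S \<union> {p. p \<notin> S \<and> (\<exists>y. 0 < pmf (K p) y \<and> y \<in> reach_within K S i)}"
proof (intro set_eqI iffI)
  fix p assume "p \<in> reach_within K S (Suc i)"
  then obtain j where "j \<le> Suc i" "0 < hit_time_prob K S p j"
    by (auto simp: reach_within_def)
  then show "p \<in> S \<union> {p. p \<notin> S \<and> (\<exists>y. 0 < pmf (K p) y \<and> y \<in> reach_within K S i)}"
    by (cases j) (auto simp: reach_within_def hit_time_prob_0 hit_time_prob_Suc_pos_iff
        split: if_splits)
next
  fix p assume "p \<in> S \<union> {p. p \<notin> S \<and> (\<exists>y. 0 < pmf (K p) y \<and> y \<in> reach_within K S i)}"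
  then show "p \<in> reach_within K S (Suc i)"
    unfolding reach_within_def
    by (force simp: hit_time_prob_0 hit_time_prob_Suc_pos_iff)
qed

lemma mono_reach_within: "mono (reach_within K S)"
  unfolding mono_def reach_within_def by (blast intro: le_trans)

definition reaches :: "('a::finite \<Rightarrow> 'a pmf) \<Rightarrow> 'a set \<Rightarrow> 'a set" where
  "reaches K S = {p. \<exists>j. 0 < hit_time_prob K S p j}"

lemma reaches_imp_hit_pos_within_card:
  fixes K :: "'a::finite \<Rightarrow> 'a pmf"
  assumes "p \<in> reaches K S"
  shows "\<exists>i<CARD('a). 0 < hit_time_prob K S p i"
proof -
  obtain j where "0 < hit_time_prob K S p j"
    using assms by (auto simp: reaches_def)
  then have "S \<noteq> {}"
    by (auto simp: hit_time_prob_def)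
  have "reach_within K S j \<subseteq> reach_within K S (CARD('a) - 1)"
    by (rule finite_mono_chain_stable[OF mono_reach_within])
      (use \<open>S \<noteq> {}\<close> in \<open>simp_all add: reach_within_0 reach_within_Suc\<close>)
  moreover have "p \<in> reach_within K S j"
    using \<open>0 < hit_time_prob K S p j\<close> by (auto simp: reach_within_def)
  ultimately obtain i where "i \<le> CARD('a) - 1" "0 < hit_time_prob K S p i"
    by (auto simp: reach_within_def)
  then show ?thesis
    by (metis One_nat_def Suc_pred le_imp_less_Suc zero_less_card_finite)
qed

lemma reaches_imp_hits_within_card_ge:
  fixes K :: "'a::finite \<Rightarrow> 'a pmf"
  assumes "p \<in> reaches K S"
  shows "y_min K ^ CARD('a) \<le> (\<Sum>j<CARD('a). hit_time_prob K S p j)"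
proof -
  obtain i where "i < CARD('a)" and pos: "0 < hit_time_prob K S p i"
    using reaches_imp_hit_pos_within_card[OF assms] by blast
  have "y_min K ^ CARD('a) \<le> y_min K ^ i"
    using \<open>i < CARD('a)\<close> y_min_pos[of K] y_min_le_1[of K] by (intro power_decreasing) auto
  also have "\<dots> \<le> hit_time_prob K S p i"
    by (rule hit_time_prob_pos_imp_ge[OF pos])
  also have "\<dots> \<le> (\<Sum>j<CARD('a). hit_time_prob K S p j)"
    using \<open>i < CARD('a)\<close> by (intro member_le_sum) (auto simp: hit_time_prob_nonneg)
  finally show ?thesis .
qed

lemma not_reaches_step:
  assumes "p \<notin> reaches K S"
  shows "p \<notin> S" and "0 < pmf (K p) y \<Longrightarrow> y \<notin> reaches K S"
proof -
  show "p \<notin> S"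
    using assms unfolding reaches_def by (metis hit_time_prob_0 mem_Collect_eq zero_less_one)
  then show "0 < pmf (K p) y \<Longrightarrow> y \<notin> reaches K S"
    using assms hit_time_prob_Suc_pos_iff[of K S p] unfolding reaches_def by blast
qed

text \<open>The probability that the run from \<open>p\<close> avoids \<open>S\<close> during the first \<open>k\<close> steps and
  is then in a state from which \<open>S\<close> is still hit with positive probability.\<close>

fun pending_hit_prob :: "('a::finite \<Rightarrow> 'a pmf) \<Rightarrow> 'a set \<Rightarrow> nat \<Rightarrow> 'a \<Rightarrow> real" where
  "pending_hit_prob K S 0 p = (if p \<in> reaches K S then 1 else 0)"
| "pending_hit_prob K S (Suc k) p =
     (if p \<in> S then 0 else (\<Sum>y\<in>UNIV. pmf (K p) y * pending_hit_prob K S k y))"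

lemma pending_hit_prob_nonneg: "0 \<le> pending_hit_prob K S k p"
  by (induction k arbitrary: p) (auto intro!: sum_nonneg)

lemma pending_hit_prob_plus_hits_le_1:
  "pending_hit_prob K S k p + (\<Sum>j<k. hit_time_prob K S p j) \<le> 1"
proof (induction k arbitrary: p)
  case 0
  then show ?case by simp
next
  case (Suc k)
  show ?case
  proof (cases "p \<in> S")
    case True
    then show ?thesis
      by (simp only: sum.lessThan_Suc_shift) (simp add: hit_time_prob_0 hit_time_prob_Suc)
  next
    case False
    have "pending_hit_prob K S (Suc k) p + (\<Sum>j<Suc k. hit_time_prob K S p j) =
            (\<Sum>y\<in>UNIV. pmf (K p) y *
               (pending_hit_prob K S k y + (\<Sum>j<k. hit_time_prob K S y j)))"
      using False unfolding sum.lessThan_Suc_shift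
      by (simp add: hit_time_prob_0 hit_time_prob_Suc distrib_left sum.distrib
          sum_distrib_left sum.swap[of _ "{..<k}"])
    also have "\<dots> \<le> (\<Sum>y\<in>UNIV. pmf (K p) y * 1)"
      by (intro sum_mono mult_left_mono Suc.IH) auto
    also have "\<dots> = 1"
      by (simp add: sum_pmf_eq_1)
    finally show ?thesis .
  qed
qed

lemma pending_hit_prob_unreachable:
  "p \<notin> reaches K S \<Longrightarrow> pending_hit_prob K S k p = 0"
proof (induction k arbitrary: p)
  case 0
  then show ?case by simp
next
  case (Suc k)
  have "pmf (K p) y * pending_hit_prob K S k y = 0" for y
    using Suc not_reaches_step(2)[OF Suc.prems, of y] pmf_nonneg[of "K p" y]
    by (cases "0 < pmf (K p) y") (auto simp: not_less)
  then show ?case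
    by (simp add: sum.neutral)
qed

lemma hit_tail_le_pending_hit_prob:
  "(\<Sum>j<N. hit_time_prob K S p (k + j)) \<le> pending_hit_prob K S k p"
proof (induction k arbitrary: p)
  case 0
  show ?case
  proof (cases "p \<in> reaches K S")
    case True
    then show ?thesis
      using pending_hit_prob_plus_hits_le_1[of K S N p] pending_hit_prob_nonneg[of K S N p]
      by simp
  next
    case False
    then have "hit_time_prob K S p j = 0" for j
      using hit_time_prob_nonneg[of K S p j] unfolding reaches_def by (auto simp: less_le)
    then show ?thesis
      by simp
  qed
next
  case (Suc k)
  have "(\<Sum>j<N. hit_time_prob K S p (Suc k + j)) =
          (if p \<in> S then 0 else
             (\<Sum>y\<in>UNIV. pmf (K p) y * (\<Sum>j<N. hit_time_prob K S y (k + j))))"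
    by (simp add: hit_time_prob_Suc sum_distrib_left sum.swap[of _ "{..<N}"])
  also have "\<dots> \<le> pending_hit_prob K S (Suc k) p"
    by (auto intro!: sum_mono mult_left_mono Suc.IH)
  finally show ?case .
qed

lemma pending_hit_prob_add_le:
  assumes "\<And>y. pending_hit_prob K S k y \<le> B" and "0 \<le> B"
  shows "pending_hit_prob K S (m + k) p \<le> B * pending_hit_prob K S m p"
proof (induction m arbitrary: p)
  case 0
  then show ?case
    using assms pending_hit_prob_unreachable[of p K S k] by auto
next
  case (Suc m)
  have "(\<Sum>y\<in>UNIV. pmf (K p) y * pending_hit_prob K S (m + k) y)
          \<le> (\<Sum>y\<in>UNIV. pmf (K p) y * (B * pending_hit_prob K S m y))"
    by (intro sum_mono mult_left_mono Suc.IH) auto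
  then show ?case
    by (simp add: sum_distrib_left algebra_simps)
qed

lemma pending_hit_prob_le_power:
  fixes K :: "'a::finite \<Rightarrow> 'a pmf"
  shows "pending_hit_prob K S k p \<le> (1 - y_min K ^ CARD('a)) ^ (k div CARD('a))"
proof -
  let ?n = "CARD('a)" and ?b = "y_min K ^ CARD('a)"
  have b: "0 \<le> ?b" "?b \<le> 1"
    using y_min_pos[of K] y_min_le_1[of K] by (auto simp: power_le_one)
  have period: "pending_hit_prob K S ?n y \<le> 1 - ?b" for y
  proof (cases "y \<in> reaches K S")
    case True
    then show ?thesis
      using reaches_imp_hits_within_card_ge pending_hit_prob_plus_hits_le_1[of K S ?n y] by fastforce
  next
    case False
    then show ?thesis
      using b pending_hit_prob_unreachable[OF False] by simp
  qed
  have "pending_hit_prob K S (q * ?n + r) p \<le> (1 - ?b) ^ q" for q r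
  proof (induction q arbitrary: p)
    case 0
    then show ?case
      using pending_hit_prob_plus_hits_le_1[of K S r p]
        sum_nonneg[of "{..<r}" "hit_time_prob K S p"] hit_time_prob_nonneg by fastforce
  next
    case (Suc q)
    have "pending_hit_prob K S ((q * ?n + r) + ?n) p \<le> (1 - ?b) * pending_hit_prob K S (q * ?n + r) p"
      using b by (intro pending_hit_prob_add_le period) auto
    also have "\<dots> \<le> (1 - ?b) * (1 - ?b) ^ q"
      using b by (intro mult_left_mono Suc.IH) auto
    finally show ?case
      by (simp add: algebra_simps)
  qed
  from this[of "k div ?n" "k mod ?n"] show ?thesis
    by simp
qed

lemma one_minus_power_le_two_exp:
  fixes b :: real
  assumes b: "0 \<le> b" "b \<le> 1" and "1 \<le> q" and k: "k < n * (q + 1)"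
  shows "(1 - b) ^ q \<le> 2 * exp (- b / real n) ^ k"
proof -
  have "0 < n"
    using k by (cases n) auto
  have "(1 - b) ^ q = (1 - b) ^ (q - 1) * (1 - b)"
    using \<open>1 \<le> q\<close> by (simp flip: power_Suc2)
  \<comment> \<open>\<open>2 (1 - b) \<le> exp (1 - 2 b)\<close> leaves the slack \<open>exp (2 b)\<close> for rounding \<open>k / n\<close> down to \<open>q\<close>\<close>
  also have "\<dots> \<le> exp (- b) ^ (q - 1) * (exp (1 - 2 * b) / 2)"
    using b exp_ge_add_one_self[of "- b"] exp_ge_add_one_self[of "1 - 2 * b"]
    by (intro mult_mono power_mono) auto
  also have "\<dots> = exp 1 / 2 * exp (- b * (q + 1))"
    using \<open>1 \<le> q\<close> by (simp flip: exp_of_nat_mult exp_add add: algebra_simps)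
  also have "\<dots> \<le> 2 * exp (- b * (q + 1))"
    using exp_le by simp
  also have "\<dots> \<le> 2 * exp (real k * (- b / real n))"
  proof -
    have "real k \<le> real n * (real q + 1)"
      using k by (metis less_imp_le of_nat_1 of_nat_add of_nat_le_iff of_nat_mult)
    then have "real k / real n \<le> real q + 1"
      using \<open>0 < n\<close> by (simp add: divide_le_eq mult.commute)
    then have "b * (real k / real n) \<le> b * (real q + 1)"
      using b by (intro mult_left_mono) auto
    then show ?thesis
      by (simp add: algebra_simps)
  qed
  also have "\<dots> = 2 * exp (- b / real n) ^ k"
    by (simp only: exp_of_nat_mult)
  finally show ?thesis .
qed

lemma sum_of_nat_mult_eq_sum_tails:
  fixes f :: "nat \<Rightarrow> 'a::comm_semiring_1"
  shows "(\<Sum>j<N. of_nat j * f j) = (\<Sum>k<N. \<Sum>j\<in>{Suc k..<N}. f j)"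
proof (induction N)
  case 0
  then show ?case by simp
next
  case (Suc N)
  have "(\<Sum>k<Suc N. \<Sum>j\<in>{Suc k..<Suc N}. f j) = (\<Sum>k<N. (\<Sum>j\<in>{Suc k..<N}. f j) + f N)"
    by (simp add: sum.distrib)
  then show ?case
    using Suc by (simp add: sum.distrib algebra_simps)
qed

lemma sum_lessThan_mult_div:
  fixes g :: "nat \<Rightarrow> 'a::comm_semiring_1"
  shows "(\<Sum>k<M * n. g (k div n)) = of_nat n * (\<Sum>m<M. g m)"
proof -
  have "(\<Sum>k\<in>{m * n..<m * n + n}. g (k div n)) = of_nat n * g m" for m
  proof -
    have "k div n = m" if "k \<in> {m * n..<m * n + n}" for k
      using that by (auto intro: div_nat_eqI simp: mult.commute)
    then show ?thesis
      by simp
  qed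
  then show ?thesis
    by (simp flip: sum.nat_group add: sum_distrib_left)
qed

lemma hit_time_tail_bound:
  fixes K :: "'a::finite \<Rightarrow> 'a pmf"
  assumes "CARD('a) \<le> k"
  shows "summable (\<lambda>j. hit_time_prob K S p (k + j))"
    and "(\<Sum>j. hit_time_prob K S p (k + j))
           \<le> 2 * exp (- (y_min K ^ CARD('a)) / real CARD('a)) ^ k"
proof -
  let ?n = "CARD('a)" and ?b = "y_min K ^ CARD('a)"
  have partial: "(\<Sum>j<N. hit_time_prob K S p (k + j)) \<le> (1 - ?b) ^ (k div ?n)" for N
    by (rule order_trans[OF hit_tail_le_pending_hit_prob pending_hit_prob_le_power])
  show "summable (\<lambda>j. hit_time_prob K S p (k + j))"
    by (rule summableI_nonneg_bounded[OF hit_time_prob_nonneg partial])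
  then have "(\<Sum>j. hit_time_prob K S p (k + j)) \<le> (1 - ?b) ^ (k div ?n)"
    using partial by (rule suminf_le_const)
  also have "\<dots> \<le> 2 * exp (- ?b / real ?n) ^ k"
  proof (rule one_minus_power_le_two_exp)
    show "0 \<le> ?b" "?b \<le> 1"
      using y_min_pos[of K] y_min_le_1[of K] by (auto simp: power_le_one)
    show "1 \<le> k div ?n"
      using assms by (simp add: div_greater_zero_iff Suc_le_eq)
    show "k < ?n * (k div ?n + 1)"
      using dividend_less_times_div[of ?n k] by (simp add: algebra_simps)
  qed
  finally show "(\<Sum>j. hit_time_prob K S p (k + j)) \<le> 2 * exp (- ?b / real ?n) ^ k" .
qed

lemma hit_time_expectation_bound:
  fixes K :: "'a::finite \<Rightarrow> 'a pmf"
  shows "summable (\<lambda>j. real j * hit_time_prob K S p j)"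
    and "(\<Sum>j. real j * hit_time_prob K S p j) \<le> real CARD('a) / y_min K ^ CARD('a)"
proof -
  let ?n = "CARD('a)" and ?b = "y_min K ^ CARD('a)"
  have b: "0 < ?b" "?b \<le> 1"
    using y_min_pos[of K] y_min_le_1[of K] by (auto simp: power_le_one)
  have tail: "(\<Sum>j\<in>{Suc k..<N}. hit_time_prob K S p j) \<le> (1 - ?b) ^ (k div ?n)" for k N
  proof -
    have "(\<Sum>j\<in>{Suc k..<N}. hit_time_prob K S p j) = (\<Sum>j<N - Suc k. hit_time_prob K S p (Suc k + j))"
      by (simp add: sum.atLeastLessThan_shift_0 atLeast0LessThan)
    also have "\<dots> \<le> (1 - ?b) ^ (Suc k div ?n)"
      by (rule order_trans[OF hit_tail_le_pending_hit_prob pending_hit_prob_le_power])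
    also have "\<dots> \<le> (1 - ?b) ^ (k div ?n)"
      using b by (intro power_decreasing div_le_mono) auto
    finally show ?thesis .
  qed
  have partial: "(\<Sum>j<N. real j * hit_time_prob K S p j) \<le> real ?n / ?b" for N
  proof -
    have "(\<Sum>j<N. real j * hit_time_prob K S p j) = (\<Sum>k<N. \<Sum>j\<in>{Suc k..<N}. hit_time_prob K S p j)"
      by (rule sum_of_nat_mult_eq_sum_tails)
    also have "\<dots> \<le> (\<Sum>k<N. (1 - ?b) ^ (k div ?n))"
      by (intro sum_mono tail)
    also have "\<dots> \<le> (\<Sum>k<N * ?n. (1 - ?b) ^ (k div ?n))"
      using b by (intro sum_mono2) auto
    also have "\<dots> = real ?n * (\<Sum>q<N. (1 - ?b) ^ q)"
      by (rule sum_lessThan_mult_div)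
    also have "\<dots> = real ?n * ((1 - (1 - ?b) ^ N) / ?b)"
      using sum_gp_strict[of "1 - ?b" N] b(1) by (simp del: power_eq_0_iff)
    also have "\<dots> \<le> real ?n * (1 / ?b)"
      using b by (intro mult_left_mono divide_right_mono) auto
    finally show ?thesis
      by simp
  qed
  show "summable (\<lambda>j. real j * hit_time_prob K S p j)"
    by (rule summableI_nonneg_bounded[OF _ partial]) (simp add: hit_time_prob_nonneg)
  then show "(\<Sum>j. real j * hit_time_prob K S p j) \<le> real ?n / ?b"
    using partial by (rule suminf_le_const)
qed

theorem mainTheorem18:
  fixes K :: "'a::finite \<Rightarrow> 'a pmf" and S :: "'a set" and p :: 'a
  defines "n \<equiv> CARD('a)"
  defines "c \<equiv> exp (- (y_min K ^ n) / real n)"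
  shows "(\<forall>k\<ge>n. summable (\<lambda>j. hit_time_prob K S p (k + j)) \<and>
                 (\<Sum>j. hit_time_prob K S p (k + j)) \<le> 2 * c ^ k)
       \<and> ((\<Sum>j. hit_time_prob K S p j) = 1 \<longrightarrow>
            summable (\<lambda>j. real j * hit_time_prob K S p j) \<and>
            (\<Sum>j. real j * hit_time_prob K S p j) \<le> 5 * real n / y_min K ^ n)"
proof (intro conjI allI impI)
  fix k
  assume "n \<le> k"
  then show "summable (\<lambda>j. hit_time_prob K S p (k + j))"
    and "(\<Sum>j. hit_time_prob K S p (k + j)) \<le> 2 * c ^ k"
    unfolding n_def c_def by (rule hit_time_tail_bound)+
next
  show "summable (\<lambda>j. real j * hit_time_prob K S p j)"
    by (rule hit_time_expectation_bound)
  have "real n / y_min K ^ n \<le> 5 * real n / y_min K ^ n"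
    using y_min_pos[of K] by (simp add: divide_right_mono)
  then show "(\<Sum>j. real j * hit_time_prob K S p j) \<le> 5 * real n / y_min K ^ n"
    using hit_time_expectation_bound(2)[of K S p] unfolding n_def by linarith
qed

end
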